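(* Let $k \ge 2$ and $v$ be integers with $v \equiv 1 \pmod{k-1}$ and $v \ge k(k-1)^2 + k$. Then \[ \beta(1,v,k) = \frac{v-1}{k-1}. \]
   Context: For integers $v \ge k \ge 2$, a $(v,k)$-packing is a pair $(X,\mathcal{B})$ where $X$ is a set of $v$ points and $\mathcal{B}$ is a set of $k$-subsets of $X$ (blocks) such that every pair of distinct points lies in at most one block. A partial parallel class (PPC) is a set of pairwise disjoint blocks; its size is the number of blocks. A PPC of size $\rho$ is maximum if the packing has no PPC of size $\rho+1$. $\beta(\rho,v,k)$ denotes the maximum number of blocks in a $(v,k)$-packing in which the maximum PPC has size $\rho$; thus $\beta(1,v,k)$ is the maximum number of blocks in a $(v,k)$-packing with no two disjoint blocks. *)

theory Defs
  imports Complex_Main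
begin

text \<open>A (v,k)-packing on the point set X (points modelled as naturals; the
notion is invariant under relabelling of points).\<close>
definition packing :: "nat \<Rightarrow> nat \<Rightarrow> nat set \<Rightarrow> nat set set \<Rightarrow> bool" where
  "packing v k X \<B> \<longleftrightarrow>
     finite X \<and> card X = v \<and>
     (\<forall>B\<in>\<B>. B \<subseteq> X \<and> card B = k) \<and>
     (\<forall>x\<in>X. \<forall>y\<in>X. x \<noteq> y \<longrightarrow> card {B\<in>\<B>. x \<in> B \<and> y \<in> B} \<le> 1)"

definition PPC :: "nat set set \<Rightarrow> nat set set \<Rightarrow> bool" where
  "PPC \<B> P \<longleftrightarrow> P \<subseteq> \<B> \<and> (\<forall>B\<in>P. \<forall>C\<in>P. B \<noteq> C \<longrightarrow> B \<inter> C = {})"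

definition max_PPC_size :: "nat set set \<Rightarrow> nat \<Rightarrow> bool" where
  "max_PPC_size \<B> \<rho> \<longleftrightarrow>
     (\<exists>P. PPC \<B> P \<and> card P = \<rho>) \<and> \<not> (\<exists>P. PPC \<B> P \<and> card P = \<rho> + 1)"

definition beta :: "nat \<Rightarrow> nat \<Rightarrow> nat \<Rightarrow> nat" where
  "beta \<rho> v k = Max {card \<B> | X \<B>. packing v k X \<B> \<and> max_PPC_size \<B> \<rho>}"

end

theory Submission
  imports Defs
begin

text \<open>Let the packing have b blocks, no two disjoint. If some point x lies on every block, the
blocks with x removed are disjoint subsets of X - {x}, so
b (k - 1) \<le> v - 1; the sunflower of (v - 1)/(k - 1) blocks through one point attains this.
Otherwise every point y misses some block D, and each block through y meets D
in its own point, so y lies on at most k blocks. Counting the blocks that meet a fixed block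
then gives b \<le> k (k - 1) + 1, which is below (v - 1)/(k - 1) once v \<ge> k (k - 1)^2 + k.\<close>

lemma packing_finite_blocks:
  assumes "packing v k X \<B>"
  shows "finite \<B>"
  using assms finite_subset[of \<B> "Pow X"] unfolding packing_def by auto

lemma packing_block:
  assumes "packing v k X \<B>" and "B \<in> \<B>"
  shows "B \<subseteq> X" "finite B" "card B = k"
  using assms finite_subset unfolding packing_def by auto

lemma packing_blocks_eq:
  assumes p: "packing v k X \<B>" and "B \<in> \<B>" "C \<in> \<B>"
    and "x \<in> B" "y \<in> B" "x \<in> C" "y \<in> C" "x \<noteq> y"
  shows "B = C"
proof -
  have "x \<in> X" "y \<in> X" using packing_block(1)[OF p \<open>B \<in> \<B>\<close>] assms by auto
  then have "card {D\<in>\<B>. x \<in> D \<and> y \<in> D} \<le> 1"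
    using p \<open>x \<noteq> y\<close> unfolding packing_def by blast
  moreover have "finite {D\<in>\<B>. x \<in> D \<and> y \<in> D}" using packing_finite_blocks[OF p] by simp
  ultimately show ?thesis using assms by (auto simp: card_le_Suc0_iff_eq)
qed

lemma max_PPC_size_1_iff:
  "max_PPC_size \<B> 1 \<longleftrightarrow> \<B> \<noteq> {} \<and> pairwise (\<lambda>B C. B \<inter> C \<noteq> {}) \<B>"
proof
  assume max: "max_PPC_size \<B> 1"
  then obtain P where "PPC \<B> P" "card P = 1" unfolding max_PPC_size_def by blast
  then have "\<B> \<noteq> {}" unfolding PPC_def by (auto simp: card_1_singleton_iff)
  moreover have "B \<inter> C \<noteq> {}" if "B \<in> \<B>" "C \<in> \<B>" "B \<noteq> C" for B C
  proof
    assume "B \<inter> C = {}"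
    then have "PPC \<B> {B, C}" using that unfolding PPC_def by auto
    moreover have "card {B, C} = 1 + 1" using \<open>B \<noteq> C\<close> by simp
    ultimately show False using max unfolding max_PPC_size_def by blast
  qed
  ultimately show "\<B> \<noteq> {} \<and> pairwise (\<lambda>B C. B \<inter> C \<noteq> {}) \<B>"
    unfolding pairwise_def by blast
next
  assume "\<B> \<noteq> {} \<and> pairwise (\<lambda>B C. B \<inter> C \<noteq> {}) \<B>"
  then obtain B where "B \<in> \<B>" and inter: "pairwise (\<lambda>B C. B \<inter> C \<noteq> {}) \<B>" by blast
  have "PPC \<B> {B}" using \<open>B \<in> \<B>\<close> unfolding PPC_def by simp
  moreover have "\<not> PPC \<B> P" if "card P = 2" for P
  proof -
    obtain B C where "P = {B, C}" "B \<noteq> C" using \<open>card P = 2\<close> by (meson card_2_iff)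
    then show ?thesis using inter unfolding PPC_def pairwise_def by auto
  qed
  ultimately show "max_PPC_size \<B> 1" unfolding max_PPC_size_def by fastforce
qed

lemma card_blocks_through_le:
  assumes p: "packing v k X \<B>" and inter: "pairwise (\<lambda>B C. B \<inter> C \<noteq> {}) \<B>"
    and "D \<in> \<B>" "y \<notin> D"
  shows "card {C\<in>\<B>. y \<in> C} \<le> k"
proof -
  define meet where "meet C = (SOME z. z \<in> C \<inter> D)" for C
  have meet: "meet C \<in> C \<inter> D" if "C \<in> {C\<in>\<B>. y \<in> C}" for C
  proof -
    have "C \<inter> D \<noteq> {}" using that inter assms(3,4) unfolding pairwise_def by auto
    then show ?thesis unfolding meet_def by (meson ex_in_conv someI_ex)
  qed
  have "inj_on meet {C\<in>\<B>. y \<in> C}"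
  proof (rule inj_onI)
    fix C C' assume C: "C \<in> {C\<in>\<B>. y \<in> C}" and C': "C' \<in> {C\<in>\<B>. y \<in> C}"
      and "meet C = meet C'"
    moreover have "meet C \<noteq> y" using meet[OF C] \<open>y \<notin> D\<close> by auto
    ultimately show "C = C'"
      using packing_blocks_eq[OF p, of C C' y "meet C"] meet[OF C] meet[OF C'] by auto
  qed
  moreover have "meet ` {C\<in>\<B>. y \<in> C} \<subseteq> D" using meet by auto
  ultimately show ?thesis
    using card_inj_on_le packing_block[OF p \<open>D \<in> \<B>\<close>] by metis
qed

lemma card_blocks_le_if_no_common_point:
  assumes p: "packing v k X \<B>" and inter: "pairwise (\<lambda>B C. B \<inter> C \<noteq> {}) \<B>"
    and B\<^sub>0: "B\<^sub>0 \<in> \<B>" and no_common: "\<forall>y. \<exists>D\<in>\<B>. y \<notin> D"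
  shows "card \<B> \<le> k * (k - 1) + 1"
proof -
  have fin: "finite \<B>" using packing_finite_blocks[OF p] .
  have B\<^sub>0_card: "finite B\<^sub>0" "card B\<^sub>0 = k" using packing_block[OF p B\<^sub>0] by auto
  have "\<B> - {B\<^sub>0} \<subseteq> (\<Union>y\<in>B\<^sub>0. {C\<in>\<B>. y \<in> C} - {B\<^sub>0})"
    using inter B\<^sub>0 unfolding pairwise_def by blast
  then have "card (\<B> - {B\<^sub>0}) \<le> card (\<Union>y\<in>B\<^sub>0. {C\<in>\<B>. y \<in> C} - {B\<^sub>0})"
    using fin B\<^sub>0_card by (intro card_mono) auto
  also have "\<dots> \<le> (\<Sum>y\<in>B\<^sub>0. card ({C\<in>\<B>. y \<in> C} - {B\<^sub>0}))"
    by (rule card_UN_le[OF B\<^sub>0_card(1)])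
  also have "\<dots> \<le> (\<Sum>y\<in>B\<^sub>0. k - 1)"
  proof (rule sum_mono)
    fix y assume "y \<in> B\<^sub>0"
    obtain D where "D \<in> \<B>" "y \<notin> D" using no_common by blast
    then have "card {C\<in>\<B>. y \<in> C} \<le> k" by (rule card_blocks_through_le[OF p inter])
    then show "card ({C\<in>\<B>. y \<in> C} - {B\<^sub>0}) \<le> k - 1"
      using \<open>y \<in> B\<^sub>0\<close> B\<^sub>0 fin by (simp add: card_Diff_singleton)
  qed
  also have "\<dots> = k * (k - 1)" using B\<^sub>0_card by simp
  finally show ?thesis using B\<^sub>0 fin by (simp add: card_Diff_singleton)
qed

lemma card_blocks_le_if_common_point:
  assumes p: "packing v k X \<B>" and "x \<in> X" and common: "\<forall>B\<in>\<B>. x \<in> B"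
  shows "card \<B> * (k - 1) \<le> v - 1"
proof -
  have X: "finite X" "card X = v" using p unfolding packing_def by auto
  have "pairwise (\<lambda>B C. (B - {x}) \<inter> (C - {x}) = {}) \<B>"
    using packing_blocks_eq[OF p] common unfolding pairwise_def by blast
  then have "card (\<Union>B\<in>\<B>. B - {x}) = (\<Sum>B\<in>\<B>. card (B - {x}))"
    using packing_finite_blocks[OF p] packing_block(2)[OF p]
    by (intro card_UN_disjoint) (auto simp: pairwise_def)
  also have "\<dots> = card \<B> * (k - 1)"
    using packing_block(3)[OF p] common by (simp add: card_Diff_singleton)
  finally have "card \<B> * (k - 1) = card (\<Union>B\<in>\<B>. B - {x})" ..
  also have "\<dots> \<le> card (X - {x})"
    using X packing_block(1)[OF p] by (intro card_mono) auto
  finally show ?thesis using X \<open>x \<in> X\<close> by (simp add: card_Diff_singleton)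
qed

lemma card_blocks_le_if_max_PPC_size_1:
  assumes p: "packing v k X \<B>" and "max_PPC_size \<B> 1"
    and v: "v \<ge> k * (k - 1)^2 + k"
  shows "card \<B> * (k - 1) \<le> v - 1"
proof -
  obtain B\<^sub>0 where B\<^sub>0: "B\<^sub>0 \<in> \<B>" and inter: "pairwise (\<lambda>B C. B \<inter> C \<noteq> {}) \<B>"
    using \<open>max_PPC_size \<B> 1\<close> unfolding max_PPC_size_1_iff by blast
  show ?thesis
  proof (cases "\<exists>x. \<forall>B\<in>\<B>. x \<in> B")
    case True
    then obtain x where "\<forall>B\<in>\<B>. x \<in> B" by blast
    moreover have "x \<in> X" using calculation B\<^sub>0 packing_block(1)[OF p] by blast
    ultimately show ?thesis using card_blocks_le_if_common_point[OF p] by blast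
  next
    case False
    then have "card \<B> \<le> k * (k - 1) + 1"
      using card_blocks_le_if_no_common_point[OF p inter B\<^sub>0] by blast
    then have "card \<B> * (k - 1) \<le> (k * (k - 1) + 1) * (k - 1)" by (rule mult_right_mono) simp
    also have "\<dots> = k * (k - 1)^2 + (k - 1)" by (simp add: power2_eq_square algebra_simps)
    finally show ?thesis using v by linarith
  qed
qed

lemma sunflower_packing:
  assumes "k \<ge> 2" and "m \<ge> 1"
  shows "\<exists>X \<B>. packing (1 + m * (k - 1)) k X \<B> \<and> max_PPC_size \<B> 1 \<and> card \<B> = m"
proof -
  define d where "d = k - 1"
  have "d \<ge> 1" "k = d + 1" using \<open>k \<ge> 2\<close> unfolding d_def by auto
  define petal where "petal i = insert (0::nat) {1 + i * d ..< 1 + (i + 1) * d}" for i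
  define \<B> where "\<B> = petal ` {..<m}"
  have petal_index: "(z - 1) div d = i" if "z \<in> petal i" "z \<noteq> 0" for z i
    using that unfolding petal_def by (intro div_nat_eqI) (auto simp: algebra_simps)
  have "inj_on petal {..<m}"
  proof (rule inj_onI)
    fix i j assume "petal i = petal j"
    moreover have "1 + i * d \<in> petal i" using \<open>d \<ge> 1\<close> unfolding petal_def by simp
    ultimately have "(1 + i * d - 1) div d = i" "(1 + i * d - 1) div d = j"
      using petal_index[of "1 + i * d"] by auto
    then show "i = j" by simp
  qed
  then have card: "card \<B> = m" unfolding \<B>_def by (simp add: card_image)
  have "packing (1 + m * (k - 1)) k {..<1 + m * d} \<B>"
    unfolding packing_def
  proof (intro conjI ballI impI)
    fix B assume "B \<in> \<B>"
    then obtain i where "i < m" "B = petal i" unfolding \<B>_def by auto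
    moreover have "(i + 1) * d \<le> m * d" using \<open>i < m\<close> by (intro mult_right_mono) auto
    ultimately show "B \<subseteq> {..<1 + m * d}" "card B = k"
      using \<open>k = d + 1\<close> unfolding petal_def by auto
  next
    fix x y :: nat assume "x \<noteq> y"
    have "B = C" if BC: "B \<in> {B \<in> \<B>. x \<in> B \<and> y \<in> B}" "C \<in> {B \<in> \<B>. x \<in> B \<and> y \<in> B}"
      for B C
    proof -
      obtain i j where "B = petal i" "C = petal j" using BC unfolding \<B>_def by auto
      moreover have "x \<noteq> 0 \<or> y \<noteq> 0" using \<open>x \<noteq> y\<close> by auto
      ultimately show ?thesis using BC petal_index by auto
    qed
    moreover have "finite {B \<in> \<B>. x \<in> B \<and> y \<in> B}" unfolding \<B>_def by simp
    ultimately show "card {B \<in> \<B>. x \<in> B \<and> y \<in> B} \<le> 1"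
      by (simp add: card_le_Suc0_iff_eq)
  qed (simp_all add: d_def)
  moreover have "max_PPC_size \<B> 1"
    unfolding max_PPC_size_1_iff pairwise_def \<B>_def petal_def
    using \<open>m \<ge> 1\<close> by (auto simp: lessThan_empty_iff)
  ultimately show ?thesis using card by blast
qed

lemma beta_eqI:
  assumes "packing v k X \<B>" "max_PPC_size \<B> \<rho>" "card \<B> = b"
    and "\<And>X \<B>. packing v k X \<B> \<Longrightarrow> max_PPC_size \<B> \<rho> \<Longrightarrow> card \<B> \<le> b"
  shows "beta \<rho> v k = b"
proof -
  let ?S = "{card \<B> | X \<B>. packing v k X \<B> \<and> max_PPC_size \<B> \<rho>}"
  have "?S \<subseteq> {..b}" using assms(4) by auto
  then have "finite ?S" by (rule finite_subset) simp
  then show ?thesis unfolding beta_def using assms by (intro Max_eqI) auto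
qed

theorem theorem5p5:
  fixes k v :: nat
  assumes "k \<ge> 2"
    and "v mod (k - 1) = 1 mod (k - 1)"
    and "v \<ge> k * (k - 1)^2 + k"
  shows "real (beta 1 v k) = (real v - 1) / (real k - 1)"
proof -
  have "1 \<le> v" using assms(1,3) by linarith
  then have "(k - 1) dvd (v - 1)" using assms(2) mod_eq_dvd_iff_nat by blast
  then obtain m where "v - 1 = m * (k - 1)" by (metis dvd_def mult.commute)
  then have m: "v = 1 + m * (k - 1)" using \<open>1 \<le> v\<close> by simp
  have "m \<ge> 1" using m assms(1,3) by (cases m) auto
  have "beta 1 v k = m"
  proof -
    obtain X \<B> where "packing v k X \<B>" "max_PPC_size \<B> 1" "card \<B> = m"
      using sunflower_packing[OF assms(1) \<open>m \<ge> 1\<close>] m by blast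
    moreover have "card \<B>' \<le> m" if "packing v k X' \<B>'" "max_PPC_size \<B>' 1" for X' \<B>'
      using card_blocks_le_if_max_PPC_size_1[OF that assms(3)] m assms(1) by simp
    ultimately show ?thesis by (rule beta_eqI)
  qed
  moreover have "real v - 1 = real m * (real k - 1)" using m assms(1) by (simp add: of_nat_diff)
  ultimately show ?thesis using assms(1) by simp
qed

end
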